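(* For a $K$-armed bandit with rewards $r\in\mathbb{R}^K$, a full-support softmax policy $\pi=\pi_\theta$, temperature $\eta>0$ and step size $\alpha>0$, let $\theta'(a)=\theta(a)+\alpha w(a)U(a)$ and $\pi'=\pi_{\theta'}$. Then, with $V=\pi^\top r$, $V'=\pi'^\top r$ and $Z=\sum_{a'}\pi(a')e^{\alpha w(a')U(a')}$, \[ V'-V=\frac1Z\sum_{a=1}^K\pi(a)U(a)\big(e^{\alpha w(a)U(a)}-1\big)\;\ge\;0. \]
   Context: $\pi_\theta(a)=e^{\theta(a)}/\sum_{a'}e^{\theta(a')}$; $U(a):=r(a)-\pi^\top r$; $\ell(a):=-\log\pi(a)$; DG gate $w(a):=\sigma(U(a)\ell(a)/\eta)$ with $\sigma(x)=1/(1+e^{-x})$. *)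

theory Defs
  imports "HOL-Analysis.Analysis"
begin

text \<open>K-armed bandit: arms form a finite type 'a (so K = CARD('a) >= 1).\<close>

definition softmax :: "('a::finite \<Rightarrow> real) \<Rightarrow> 'a \<Rightarrow> real" where
  "softmax \<theta> a = exp (\<theta> a) / (\<Sum>a'\<in>UNIV. exp (\<theta> a'))"

definition value_of :: "('a::finite \<Rightarrow> real) \<Rightarrow> ('a \<Rightarrow> real) \<Rightarrow> real" where
  "value_of \<pi> r = (\<Sum>a\<in>UNIV. \<pi> a * r a)"

definition adv :: "('a::finite \<Rightarrow> real) \<Rightarrow> ('a \<Rightarrow> real) \<Rightarrow> 'a \<Rightarrow> real" where
  "adv \<pi> r a = r a - value_of \<pi> r"

definition surprisal :: "('a \<Rightarrow> real) \<Rightarrow> 'a \<Rightarrow> real" where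
  "surprisal \<pi> a = - ln (\<pi> a)"

definition sigmoid :: "real \<Rightarrow> real" where
  "sigmoid x = 1 / (1 + exp (- x))"

definition gate :: "real \<Rightarrow> ('a::finite \<Rightarrow> real) \<Rightarrow> ('a \<Rightarrow> real) \<Rightarrow> 'a \<Rightarrow> real" where
  "gate \<eta> \<pi> r a = sigmoid (adv \<pi> r a * surprisal \<pi> a / \<eta>)"

end

theory Submission
  imports Defs
begin

text \<open>The update multiplies each softmax weight by \<open>e\<^sub>a = exp (\<alpha> w(a) U(a))\<close>, so \<open>\<pi>'\<close> is the
  exponential tilt of \<open>\<pi>\<close> by these factors, normalised by \<open>Z\<close>. Since the advantages have
  \<open>\<pi>\<close>-mean zero, the value gain is \<open>\<Sum>\<^sub>a \<pi>(a) U(a) (e\<^sub>a - 1) / Z\<close>, and every summand is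
  nonnegative because the gate is positive, so \<open>e\<^sub>a - 1\<close> has the sign of \<open>U(a)\<close>.\<close>

lemma softmax_pos: "softmax \<theta> a > 0"
  unfolding softmax_def by (simp add: sum_pos)

lemma sum_softmax: "(\<Sum>a\<in>UNIV. softmax \<theta> a) = 1"
  unfolding softmax_def by (simp add: sum_divide_distrib[symmetric] sum_pos less_imp_neq[symmetric])

lemma softmax_add:
  fixes \<theta> g :: "'a::finite \<Rightarrow> real"
  shows "softmax (\<lambda>a. \<theta> a + g a) a
           = softmax \<theta> a * exp (g a) / (\<Sum>b\<in>UNIV. softmax \<theta> b * exp (g b))"
proof -
  define S where "S = (\<Sum>b\<in>UNIV. exp (\<theta> b))"
  have "S > 0"
    unfolding S_def by (simp add: sum_pos)
  have "(\<Sum>b\<in>UNIV. softmax \<theta> b * exp (g b)) = (\<Sum>b\<in>UNIV. exp (\<theta> b + g b)) / S"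
    unfolding softmax_def S_def by (simp add: exp_add sum_divide_distrib)
  with \<open>S > 0\<close> show ?thesis
    unfolding softmax_def S_def[symmetric] by (simp add: exp_add)
qed

lemma sum_mult_adv:
  assumes "(\<Sum>a\<in>UNIV. \<pi> a) = 1"
  shows "(\<Sum>a\<in>UNIV. \<pi> a * adv \<pi> r a) = 0"
  using assms unfolding adv_def value_of_def
  by (simp add: right_diff_distrib sum_subtractf sum_distrib_right[symmetric])

lemma value_of_tilt_diff:
  fixes \<pi> e r :: "'a::finite \<Rightarrow> real"
  assumes "(\<Sum>a\<in>UNIV. \<pi> a) = 1"
  defines "Z \<equiv> (\<Sum>a\<in>UNIV. \<pi> a * e a)"
  assumes "Z \<noteq> 0"
  shows "value_of (\<lambda>a. \<pi> a * e a / Z) r - value_of \<pi> r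
           = (1 / Z) * (\<Sum>a\<in>UNIV. \<pi> a * adv \<pi> r a * (e a - 1))"
proof -
  have "(\<Sum>a\<in>UNIV. \<pi> a * adv \<pi> r a * (e a - 1)) = (\<Sum>a\<in>UNIV. \<pi> a * adv \<pi> r a * e a)"
    using sum_mult_adv[OF assms(1)] by (simp add: right_diff_distrib sum_subtractf)
  also have "\<dots> = (\<Sum>a\<in>UNIV. \<pi> a * e a * r a) - value_of \<pi> r * Z"
    unfolding Z_def adv_def
    by (simp add: sum_distrib_left sum_subtractf[symmetric] algebra_simps)
  finally show ?thesis
    using \<open>Z \<noteq> 0\<close> unfolding value_of_def
    by (simp add: sum_divide_distrib[symmetric] field_simps)
qed

lemma mult_exp_mult_minus_one_nonneg:
  fixes c u :: real
  assumes "c \<ge> 0"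
  shows "u * (exp (c * u) - 1) \<ge> 0"
proof (cases "u \<ge> 0")
  case True
  then show ?thesis using assms by simp
next
  case False
  then have "exp (c * u) \<le> 1"
    using assms by (simp add: mult_nonneg_nonpos)
  then show ?thesis using False by (simp add: mult_nonpos_nonpos)
qed

lemma gate_pos: "gate \<eta> \<pi> r a > 0"
  unfolding gate_def sigmoid_def by (simp add: add_pos_pos)

theorem lemma8:
  fixes \<theta> r :: "'a::finite \<Rightarrow> real" and \<eta> \<alpha> :: real
  assumes "\<eta> > 0" and "\<alpha> > 0"
  defines "\<pi> \<equiv> softmax \<theta>"
  defines "\<theta>' \<equiv> (\<lambda>a. \<theta> a + \<alpha> * gate \<eta> \<pi> r a * adv \<pi> r a)"
  defines "\<pi>' \<equiv> softmax \<theta>'"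
  defines "Z \<equiv> (\<Sum>a'\<in>UNIV. \<pi> a' * exp (\<alpha> * gate \<eta> \<pi> r a' * adv \<pi> r a'))"
  shows "value_of \<pi>' r - value_of \<pi> r
           = (1 / Z) * (\<Sum>a\<in>UNIV. \<pi> a * adv \<pi> r a * (exp (\<alpha> * gate \<eta> \<pi> r a * adv \<pi> r a) - 1))
         \<and> (1 / Z) * (\<Sum>a\<in>UNIV. \<pi> a * adv \<pi> r a * (exp (\<alpha> * gate \<eta> \<pi> r a * adv \<pi> r a) - 1)) \<ge> 0"
proof
  define e where "e a = exp (\<alpha> * gate \<eta> \<pi> r a * adv \<pi> r a)" for a
  have "Z > 0"
    unfolding Z_def \<pi>_def by (simp add: sum_pos softmax_pos)
  have \<pi>': "\<pi>' = (\<lambda>a. \<pi> a * e a / Z)"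
    unfolding \<pi>'_def \<theta>'_def \<pi>_def Z_def e_def by (intro ext) (rule softmax_add)
  show "value_of \<pi>' r - value_of \<pi> r = (1 / Z) * (\<Sum>a\<in>UNIV. \<pi> a * adv \<pi> r a * (e a - 1))"
    unfolding \<pi>' using value_of_tilt_diff[of \<pi> e r] \<open>Z > 0\<close>
    by (simp add: \<pi>_def sum_softmax Z_def e_def)
  have "\<pi> a * (adv \<pi> r a * (e a - 1)) \<ge> 0" for a
  proof -
    have "\<alpha> * gate \<eta> \<pi> r a \<ge> 0"
      using \<open>\<alpha> > 0\<close> gate_pos[of \<eta> \<pi> r a] by simp
    then have "adv \<pi> r a * (e a - 1) \<ge> 0"
      unfolding e_def by (rule mult_exp_mult_minus_one_nonneg)
    then show ?thesis
      unfolding \<pi>_def by (simp add: softmax_pos less_imp_le)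
  qed
  then show "(1 / Z) * (\<Sum>a\<in>UNIV. \<pi> a * adv \<pi> r a * (e a - 1)) \<ge> 0"
    using \<open>Z > 0\<close> by (simp add: sum_nonneg mult.assoc)
qed

end
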